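(* Let $G$ be a finite simple connected graph with at least $4$ vertices and $\delta_2(G)\geqslant 4$. Then either $G$ contains a chorded cycle, or every leaf block of $G$ is a triangle.
   Context: $\delta_2(G)$ is the minimum of $|N_G(u)\cup N_G(v)|$ over all pairs of distinct nonadjacent vertices $u,v$ of $G$. A chorded cycle is a cycle together with an edge of the graph, not on the cycle, joining two vertices of the cycle. A block is a maximal subgraph without cut-vertices; a leaf block of a connected graph is a block containing exactly one cut-vertex of the graph. *)

theory Defs
  imports Main
begin

definition sgraph :: "'a set \<Rightarrow> ('a \<Rightarrow> 'a \<Rightarrow> bool) \<Rightarrow> bool" where
  "sgraph V E \<longleftrightarrow> finite V \<and> (\<forall>u v. E u v \<longrightarrow> u \<in> V \<and> v \<in> V)
     \<and> (\<forall>u v. E u v \<longrightarrow> E v u) \<and> (\<forall>u. \<not> E u u)"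

definition nbhd :: "'a set \<Rightarrow> ('a \<Rightarrow> 'a \<Rightarrow> bool) \<Rightarrow> 'a \<Rightarrow> 'a set" where
  "nbhd V E u = {w \<in> V. E u w}"

definition reach_in :: "('a \<Rightarrow> 'a \<Rightarrow> bool) \<Rightarrow> 'a set \<Rightarrow> 'a \<Rightarrow> 'a \<Rightarrow> bool" where
  "reach_in E S u v \<longleftrightarrow> u \<in> S \<and> (\<lambda>a b. a \<in> S \<and> b \<in> S \<and> E a b)\<^sup>*\<^sup>* u v"

definition connected_in :: "('a \<Rightarrow> 'a \<Rightarrow> bool) \<Rightarrow> 'a set \<Rightarrow> bool" where
  "connected_in E S \<longleftrightarrow> (\<forall>u\<in>S. \<forall>v\<in>S. reach_in E S u v)"

text \<open>x is a cut-vertex of the induced subgraph G[S]: deleting x increases the number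
  of components, i.e. two vertices of S - {x} connected in G[S] become disconnected.\<close>
definition cut_vertex :: "('a \<Rightarrow> 'a \<Rightarrow> bool) \<Rightarrow> 'a set \<Rightarrow> 'a \<Rightarrow> bool" where
  "cut_vertex E S x \<longleftrightarrow> x \<in> S \<and>
     (\<exists>u\<in>S - {x}. \<exists>v\<in>S - {x}. reach_in E S u v \<and> \<not> reach_in E (S - {x}) u v)"

text \<open>A block is a maximal connected subgraph without cut-vertices; maximal such
  subgraphs are induced, so we represent blocks by their vertex sets.\<close>
definition nonsep :: "('a \<Rightarrow> 'a \<Rightarrow> bool) \<Rightarrow> 'a set \<Rightarrow> bool" where
  "nonsep E B \<longleftrightarrow> B \<noteq> {} \<and> connected_in E B \<and> (\<forall>x. \<not> cut_vertex E B x)"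

definition is_block :: "'a set \<Rightarrow> ('a \<Rightarrow> 'a \<Rightarrow> bool) \<Rightarrow> 'a set \<Rightarrow> bool" where
  "is_block V E B \<longleftrightarrow> B \<subseteq> V \<and> nonsep E B \<and>
     (\<forall>B'. B \<subset> B' \<and> B' \<subseteq> V \<longrightarrow> \<not> nonsep E B')"

definition leaf_block :: "'a set \<Rightarrow> ('a \<Rightarrow> 'a \<Rightarrow> bool) \<Rightarrow> 'a set \<Rightarrow> bool" where
  "leaf_block V E B \<longleftrightarrow> is_block V E B \<and> card {x \<in> B. cut_vertex E V x} = 1"

definition is_triangle :: "('a \<Rightarrow> 'a \<Rightarrow> bool) \<Rightarrow> 'a set \<Rightarrow> bool" where
  "is_triangle E B \<longleftrightarrow> card B = 3 \<and> (\<forall>u\<in>B. \<forall>v\<in>B. u \<noteq> v \<longrightarrow> E u v)"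

definition is_cycle :: "'a set \<Rightarrow> ('a \<Rightarrow> 'a \<Rightarrow> bool) \<Rightarrow> 'a list \<Rightarrow> bool" where
  "is_cycle V E cs \<longleftrightarrow> length cs \<ge> 3 \<and> distinct cs \<and> set cs \<subseteq> V \<and>
     (\<forall>i < length cs. E (cs ! i) (cs ! ((i + 1) mod length cs)))"

definition has_chorded_cycle :: "'a set \<Rightarrow> ('a \<Rightarrow> 'a \<Rightarrow> bool) \<Rightarrow> bool" where
  "has_chorded_cycle V E \<longleftrightarrow> (\<exists>cs. is_cycle V E cs \<and>
     (\<exists>i < length cs. \<exists>j < length cs. i \<noteq> j \<and> E (cs ! i) (cs ! j) \<and>
        j \<noteq> (i + 1) mod length cs \<and> i \<noteq> (j + 1) mod length cs))"

text \<open>delta_2(G) >= k: every pair of distinct nonadjacent vertices has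
  |N(u) \<union> N(v)| >= k (vacuous when there is no such pair).\<close>
definition delta2_ge :: "'a set \<Rightarrow> ('a \<Rightarrow> 'a \<Rightarrow> bool) \<Rightarrow> nat \<Rightarrow> bool" where
  "delta2_ge V E k \<longleftrightarrow> (\<forall>u\<in>V. \<forall>v\<in>V. u \<noteq> v \<and> \<not> E u v \<longrightarrow>
     card (nbhd V E u \<union> nbhd V E v) \<ge> k)"

end

theory Submission
  imports Defs
begin

text \<open>Suppose G has no chorded cycle. Then G has minimum degree at least 2: for a vertex u
  of degree 1, the bound \<delta>_2(G) \<ge> 4 gives every non-neighbour of u degree at least 3, and
  the end of a longest path starting at u has at least three neighbours, all on the path,
  which yields a chord.

  Now let B be a leaf block with cut vertex x. Every other vertex of B has all its neighbours
  in B, so the end y of a longest path x = v_0, ..., v_m = y in B has all its neighbours on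
  the path, and without chorded cycles y has exactly two: v_(m-1) and some v_i. The Posa
  rotation at v_i turns v_(i+1) into the end of another longest path from x, so
  N(v_(i+1)) = {v_i, v_(i+2)}. If i < m - 2, then y and v_(i+1) are nonadjacent with
  |N(y) \<union> N(v_(i+1))| \<le> 3, contradicting \<delta>_2(G) \<ge> 4. Hence v_(m-2), v_(m-1), y is a
  triangle whose two vertices of degree 2 are joined to the rest of B only through v_(m-2);
  since B has no cut vertex, B is this triangle.\<close>

section \<open>Graphs, paths and reachability\<close>

lemma sgraph_symp: "sgraph V E \<Longrightarrow> symp E"
  unfolding sgraph_def symp_def by blast

lemma sgraph_irrefl: "sgraph V E \<Longrightarrow> \<not> E a a"
  unfolding sgraph_def by blast

lemma sgraph_edge_in: "sgraph V E \<Longrightarrow> E a b \<Longrightarrow> a \<in> V \<and> b \<in> V"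
  unfolding sgraph_def by blast

lemma sgraph_finite: "sgraph V E \<Longrightarrow> finite V"
  unfolding sgraph_def by blast

lemma finite_nbhd: "sgraph V E \<Longrightarrow> finite (nbhd V E u)"
  unfolding sgraph_def nbhd_def by simp

lemma nbhd_subset: "nbhd V E u \<subseteq> V"
  unfolding nbhd_def by blast

lemma in_nbhd_iff: "sgraph V E \<Longrightarrow> z \<in> nbhd V E u \<longleftrightarrow> E u z"
  unfolding sgraph_def nbhd_def by blast

lemma card_2_eq:
  assumes "card A = 2" "a \<in> A" "b \<in> A" "a \<noteq> b"
  shows "A = {a, b}"
proof -
  have "finite A"
    using assms(1) by (intro card_ge_0_finite) simp
  with assms show ?thesis
    using card_subset_eq[of A "{a, b}"] by simp
qed

definition path_in :: "('a \<Rightarrow> 'a \<Rightarrow> bool) \<Rightarrow> 'a set \<Rightarrow> 'a list \<Rightarrow> bool" where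
  "path_in E S ps \<longleftrightarrow> ps \<noteq> [] \<and> distinct ps \<and> set ps \<subseteq> S \<and> successively E ps"

lemma successively_take: "successively P xs \<Longrightarrow> successively P (take n xs)"
  using successively_append_iff[of P "take n xs" "drop n xs"] by simp

lemma successively_drop: "successively P xs \<Longrightarrow> successively P (drop n xs)"
  using successively_append_iff[of P "take n xs" "drop n xs"] by simp

lemma path_in_nth_neq:
  "path_in E S ps \<Longrightarrow> j < length ps \<Longrightarrow> k < length ps \<Longrightarrow> j \<noteq> k \<Longrightarrow> ps ! j \<noteq> ps ! k"
  unfolding path_in_def by (simp add: nth_eq_iff_index_eq)

lemma path_in_nth_mem: "path_in E S ps \<Longrightarrow> j < length ps \<Longrightarrow> ps ! j \<in> S"
  unfolding path_in_def by (meson nth_mem subsetD)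

lemma path_in_mono: "path_in E S ps \<Longrightarrow> S \<subseteq> T \<Longrightarrow> path_in E T ps"
  unfolding path_in_def by blast

lemma path_in_drop: "path_in E S ps \<Longrightarrow> n < length ps \<Longrightarrow> path_in E S (drop n ps)"
  unfolding path_in_def by (auto simp: successively_drop dest: in_set_dropD)

lemma reach_in_refl: "u \<in> S \<Longrightarrow> reach_in E S u u"
  unfolding reach_in_def by simp

lemma reach_in_edge: "u \<in> S \<Longrightarrow> v \<in> S \<Longrightarrow> E u v \<Longrightarrow> reach_in E S u v"
  unfolding reach_in_def by auto

lemma reach_in_trans: "reach_in E S u v \<Longrightarrow> reach_in E S v w \<Longrightarrow> reach_in E S u w"
  unfolding reach_in_def by auto

lemma reach_in_closed:
  assumes "reach_in E S u v" "u \<in> C" "\<forall>a b. a \<in> C \<longrightarrow> b \<in> S \<longrightarrow> E a b \<longrightarrow> b \<in> C"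
  shows "v \<in> C"
proof -
  have "(\<lambda>a b. a \<in> S \<and> b \<in> S \<and> E a b)\<^sup>*\<^sup>* u v"
    using assms(1) unfolding reach_in_def by simp
  then show ?thesis
    by (induction rule: rtranclp_induct) (use assms(2,3) in auto)
qed

lemma reach_in_target: "reach_in E S u v \<Longrightarrow> v \<in> S"
  by (rule reach_in_closed[where C = S]) (auto simp: reach_in_def)

lemma reach_in_mono:
  assumes "reach_in E S u v" "S \<subseteq> T"
  shows "reach_in E T u v"
proof -
  have "(\<lambda>a b. a \<in> S \<and> b \<in> S \<and> E a b)\<^sup>*\<^sup>* u v"
    using assms(1) unfolding reach_in_def by simp
  then have "(\<lambda>a b. a \<in> T \<and> b \<in> T \<and> E a b)\<^sup>*\<^sup>* u v"
    by (rule mono_rtranclp[rule_format, rotated]) (use assms(2) in blast)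
  then show ?thesis
    using assms unfolding reach_in_def by blast
qed

lemma reach_in_sym:
  assumes "symp E" "reach_in E S u v"
  shows "reach_in E S v u"
proof -
  have "symp (\<lambda>a b. a \<in> S \<and> b \<in> S \<and> E a b)"
    using assms(1) by (auto intro: sympI dest: sympD)
  then have "(\<lambda>a b. a \<in> S \<and> b \<in> S \<and> E a b)\<^sup>*\<^sup>* v u"
    using assms(2) unfolding reach_in_def by (blast dest: sympD[OF symp_rtranclp])
  then show ?thesis
    using reach_in_target[OF assms(2)] unfolding reach_in_def by simp
qed

lemma reach_in_imp_edge:
  assumes "reach_in E S u v" "u \<noteq> v"
  shows "\<exists>w\<in>S. E u w"
proof -
  have "(\<lambda>a b. a \<in> S \<and> b \<in> S \<and> E a b)\<^sup>*\<^sup>* u v"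
    using assms(1) unfolding reach_in_def by simp
  then show ?thesis
    using assms(2) by (cases rule: converse_rtranclpE) auto
qed

lemma reach_in_successively:
  "successively E ps \<Longrightarrow> ps \<noteq> [] \<Longrightarrow> set ps \<subseteq> S \<Longrightarrow> reach_in E S (hd ps) (last ps)"
  by (induction E ps rule: successively.induct)
    (auto intro: reach_in_refl reach_in_edge reach_in_trans)

lemma reach_in_imp_path:
  assumes "reach_in E S u v"
  shows "\<exists>ps. path_in E S ps \<and> hd ps = u \<and> last ps = v"
proof -
  have "(\<lambda>a b. a \<in> S \<and> b \<in> S \<and> E a b)\<^sup>*\<^sup>* u v" "u \<in> S"
    using assms unfolding reach_in_def by simp_all
  then show ?thesis
  proof (induction rule: rtranclp_induct)
    case base
    then show ?case
      by (intro exI[of _ "[u]"]) (simp add: path_in_def)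
  next
    case (step a b)
    then obtain ps where ps: "path_in E S ps" "hd ps = u" "last ps = a"
      by blast
    show ?case
    proof (cases "b \<in> set ps")
      case True
      then obtain xs ys where "ps = xs @ b # ys"
        by (blast dest: split_list)
      then have split: "ps = (xs @ [b]) @ ys"
        by simp
      then have "successively E (xs @ [b])"
        using ps(1) unfolding path_in_def by (metis successively_append_iff)
      then have "path_in E S (xs @ [b])"
        using ps(1) split unfolding path_in_def by auto
      moreover have "hd (xs @ [b]) = u"
        using ps(2) split by (cases xs) auto
      ultimately show ?thesis
        by (metis last_snoc)
    next
      case False
      have "b \<in> S" "E a b"
        using step.hyps(2) by simp_all
      with False ps have "path_in E S (ps @ [b])"
        unfolding path_in_def by (simp add: successively_append_iff)
      moreover have "hd (ps @ [b]) = u"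
        using ps(1,2) unfolding path_in_def by simp
      ultimately show ?thesis
        by (metis last_snoc)
    qed
  qed
qed

lemma connected_in_if_reaches:
  assumes "symp E" "connected_in E K" "K \<subseteq> S" "\<forall>a\<in>S. \<exists>k\<in>K. reach_in E S a k"
  shows "connected_in E S"
  unfolding connected_in_def
proof (intro ballI)
  fix a b
  assume "a \<in> S" "b \<in> S"
  then obtain k l where "k \<in> K" "reach_in E S a k" "l \<in> K" "reach_in E S b l"
    using assms(4) by blast
  moreover have "reach_in E S k l"
    using assms(2) \<open>k \<in> K\<close> \<open>l \<in> K\<close> reach_in_mono[OF _ assms(3)]
    unfolding connected_in_def by blast
  ultimately show "reach_in E S a b"
    by (meson reach_in_sym[OF assms(1)] reach_in_trans)
qed

lemma ex_neighbour:
  assumes "connected_in E V" "u \<in> V" "t \<in> V" "t \<noteq> u"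
  shows "\<exists>v\<in>V. E u v"
proof -
  from assms(1-3) have "reach_in E V u t"
    unfolding connected_in_def by blast
  with assms(4) show ?thesis
    by (metis reach_in_imp_edge)
qed

section \<open>Nonseparable sets and blocks\<close>

lemma connected_in_Diff_nonsep:
  assumes "nonsep E B" "C \<subseteq> {c}"
  shows "connected_in E (B - C)"
  unfolding connected_in_def
proof (intro ballI)
  fix a b
  assume ab: "a \<in> B - C" "b \<in> B - C"
  then have reach: "reach_in E B a b"
    using assms(1) unfolding nonsep_def connected_in_def by blast
  show "reach_in E (B - C) a b"
  proof (cases "C = {c} \<and> c \<in> B")
    case True
    with ab reach assms(1) show ?thesis
      unfolding nonsep_def cut_vertex_def by blast
  next
    case False
    with assms(2) have "B - C = B"
      by blast
    with reach show ?thesis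
      by simp
  qed
qed

lemma nonsep_edge:
  assumes "symp E" "E w z"
  shows "nonsep E {w, z}"
proof -
  have conn: "connected_in E T" if "T \<subseteq> {w, z}" for T
    unfolding connected_in_def
  proof (intro ballI)
    fix a b
    assume ab: "a \<in> T" "b \<in> T"
    show "reach_in E T a b"
    proof (cases "a = b")
      case True
      with ab show ?thesis
        by (simp add: reach_in_refl)
    next
      case False
      with ab that have "E a b"
        using assms sympD[OF assms(1)] by blast
      with ab show ?thesis
        by (simp add: reach_in_edge)
    qed
  qed
  have "\<not> cut_vertex E {w, z} c" for c
    using conn[of "{w, z} - {c}"] unfolding cut_vertex_def connected_in_def by blast
  with conn[of "{w, z}"] show ?thesis
    unfolding nonsep_def by blast
qed

lemma path_reaches_end_in_Diff:
  assumes sym: "symp E" and ps: "distinct ps" "successively E ps" and C: "C \<subseteq> {c}"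
    and v: "v \<in> set ps - C" and T: "set ps - C \<subseteq> T"
  shows "\<exists>k\<in>{hd ps, last ps} - C. reach_in E T v k"
proof -
  obtain xs ys where split: "ps = xs @ v # ys"
    using v by (blast dest: split_list)
  have "C \<inter> set xs = {} \<or> C \<inter> set ys = {}"
    using C ps(1) split by auto
  then consider "C \<inter> set (xs @ [v]) = {}" | "C \<inter> set (v # ys) = {}"
    using v by auto
  then show ?thesis
  proof cases
    case 1
    have walk: "successively E (xs @ [v])"
      using ps(2) split successively_append_iff[of E "xs @ [v]" ys] by simp
    have sub: "set (xs @ [v]) \<subseteq> T"
      using 1 split T by auto
    have hd: "hd ps = hd (xs @ [v])"
      using split by (cases xs) auto
    have "reach_in E T (hd ps) v"
      using reach_in_successively[OF walk _ sub] hd by simp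
    moreover have "hd ps \<notin> C"
      using 1 hd by (metis disjoint_iff list.set_sel(1) snoc_eq_iff_butlast)
    ultimately show ?thesis
      using reach_in_sym[OF sym] by blast
  next
    case 2
    have walk: "successively E (v # ys)"
      using ps(2) split successively_append_iff[of E xs "v # ys"] by simp
    have sub: "set (v # ys) \<subseteq> T"
      using 2 split T by auto
    have last: "last ps = last (v # ys)"
      using split by simp
    have "reach_in E T v (last ps)"
      using reach_in_successively[OF walk _ sub] last by simp
    moreover have "last ps \<notin> C"
      using 2 last by (metis disjoint_iff last_in_set list.distinct(1))
    ultimately show ?thesis
      by blast
  qed
qed

lemma nonsep_Un_path:
  assumes sym: "symp E" and B: "nonsep E B"
    and ps: "distinct ps" "successively E ps" "hd ps \<in> B" "last ps \<in> B"
  shows "nonsep E (B \<union> set ps)"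
proof -
  have conn: "connected_in E (B \<union> set ps - C)" if C: "C \<subseteq> {c}" for C c
  proof (rule connected_in_if_reaches[OF sym connected_in_Diff_nonsep[OF B C]])
    show "B - C \<subseteq> B \<union> set ps - C"
      by blast
    show "\<forall>v\<in>B \<union> set ps - C. \<exists>k\<in>B - C. reach_in E (B \<union> set ps - C) v k"
    proof
      fix v
      assume v: "v \<in> B \<union> set ps - C"
      show "\<exists>k\<in>B - C. reach_in E (B \<union> set ps - C) v k"
      proof (cases "v \<in> B")
        case True
        with v show ?thesis
          by (blast intro: reach_in_refl)
      next
        case False
        with v have "v \<in> set ps - C"
          by blast
        moreover have "set ps - C \<subseteq> B \<union> set ps - C"
          by blast
        ultimately obtain k where "k \<in> {hd ps, last ps} - C" "reach_in E (B \<union> set ps - C) v k"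
          using path_reaches_end_in_Diff[OF sym ps(1,2) C] by blast
        with ps(3,4) show ?thesis
          by blast
      qed
    qed
  qed
  have "connected_in E (B \<union> set ps)" "connected_in E (B \<union> set ps - {c})" for c
    using conn[of "{}"] conn[of "{c}" c] by simp_all
  then show ?thesis
    using B unfolding nonsep_def cut_vertex_def connected_in_def by blast
qed

lemma nonsep_eq_insert_if_boundary:
  assumes B: "nonsep E B" and C: "C \<subseteq> B" "c \<in> C" and a: "a \<in> B" "a \<notin> C"
    and boundary: "\<forall>u\<in>C. \<forall>w\<in>B. E u w \<longrightarrow> w \<in> insert a C"
  shows "B = insert a C"
proof (rule ccontr)
  assume "B \<noteq> insert a C"
  with C a obtain t where t: "t \<in> B" "t \<notin> insert a C"
    by blast
  have "reach_in E B c t"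
    using B C t unfolding nonsep_def connected_in_def by blast
  moreover have "\<not> reach_in E (B - {a}) c t"
  proof
    assume "reach_in E (B - {a}) c t"
    then have "t \<in> C"
      by (rule reach_in_closed) (use C boundary in auto)
    with t show False
      by blast
  qed
  ultimately have "cut_vertex E B a"
    unfolding cut_vertex_def using C a t by blast
  with B show False
    unfolding nonsep_def by blast
qed

lemma block_has_other_vertex:
  assumes sg: "sgraph V E" and conn: "connected_in E V" and V: "2 \<le> card V"
    and B: "is_block V E B" and x: "x \<in> B"
  shows "\<exists>b\<in>B. b \<noteq> x"
proof (rule ccontr)
  assume "\<not> (\<exists>b\<in>B. b \<noteq> x)"
  with x have B_eq: "B = {x}"
    by blast
  have x_V: "x \<in> V"
    using B x unfolding is_block_def by blast
  have "V \<noteq> {x}"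
    using V by (intro notI) simp
  with x_V obtain t where "t \<in> V" "t \<noteq> x"
    by blast
  then obtain y where y: "y \<in> V" "E x y"
    using ex_neighbour[OF conn x_V] by blast
  then have "x \<noteq> y"
    using sgraph_irrefl[OF sg] by metis
  then have "B \<subset> {x, y}"
    using B_eq by auto
  moreover have "{x, y} \<subseteq> V"
    using x_V y by simp
  moreover have "nonsep E {x, y}"
    using nonsep_edge[OF sgraph_symp[OF sg] y(2)] .
  ultimately show False
    using B unfolding is_block_def by blast
qed

text \<open>Otherwise a path from the outside neighbour back to B avoiding w would, together
  with w, enlarge B to a bigger nonseparable set.\<close>

lemma nbhd_subset_block:
  assumes sg: "sgraph V E" and conn: "connected_in E V" and V: "2 \<le> card V"
    and B: "is_block V E B" and w: "w \<in> B" "\<not> cut_vertex E V w"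
  shows "nbhd V E w \<subseteq> B"
proof
  fix z
  assume "z \<in> nbhd V E w"
  then have z: "z \<in> V" "E w z"
    unfolding nbhd_def by simp_all
  show "z \<in> B"
  proof (rule ccontr)
    assume z_B: "z \<notin> B"
    have BV: "B \<subseteq> V"
      using B unfolding is_block_def by blast
    obtain b where b: "b \<in> B" "b \<noteq> w"
      using block_has_other_vertex[OF sg conn V B w(1)] by blast
    have "z \<noteq> w"
      using z sgraph_irrefl[OF sg] by blast
    then have "reach_in E (V - {w}) z b"
      using w conn z b BV unfolding cut_vertex_def connected_in_def by blast
    then have "\<exists>qs. path_in E (V - {w}) qs \<and> hd qs = z \<and> last qs = b"
      by (rule reach_in_imp_path)
    then obtain qs where qs: "path_in E (V - {w}) qs" "hd qs = z" "last qs = b"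
      by blast
    have "nonsep E (B \<union> set (w # qs))"
    proof (rule nonsep_Un_path[OF sgraph_symp[OF sg]])
      show "nonsep E B"
        using B unfolding is_block_def by blast
      show "distinct (w # qs)" "successively E (w # qs)"
        using qs z unfolding path_in_def by (auto simp: successively_Cons)
      show "hd (w # qs) \<in> B" "last (w # qs) \<in> B"
        using qs w b unfolding path_in_def by auto
    qed
    moreover have "B \<subset> B \<union> set (w # qs)" "B \<union> set (w # qs) \<subseteq> V"
      using qs z_B w BV unfolding path_in_def by auto
    ultimately show False
      using B unfolding is_block_def by blast
  qed
qed

section \<open>Chorded cycles\<close>

lemma is_cycle_if_closed_path:
  assumes cs: "path_in E V cs" "3 \<le> length cs" and closing: "E (last cs) (hd cs)"
  shows "is_cycle V E cs"
  unfolding is_cycle_def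
proof (intro conjI allI impI)
  show "3 \<le> length cs" "distinct cs" "set cs \<subseteq> V"
    using cs unfolding path_in_def by simp_all
  fix i
  assume i: "i < length cs"
  show "E (cs ! i) (cs ! ((i + 1) mod length cs))"
  proof (cases "Suc i < length cs")
    case True
    with cs(1) show ?thesis
      unfolding path_in_def by (simp add: successively_nth)
  next
    case False
    with i have "Suc i = length cs"
      by simp
    then have "i = length cs - 1" "(i + 1) mod length cs = 0"
      by simp_all
    with cs(1) closing show ?thesis
      unfolding path_in_def by (simp add: last_conv_nth hd_conv_nth)
  qed
qed

lemma has_chorded_cycle_if_chord:
  assumes cs: "path_in E V cs" and closing: "E (last cs) (hd cs)"
    and chord: "E (last cs) (cs ! k)" "0 < k" "k + 2 < length cs"
  shows "has_chorded_cycle V E"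
proof -
  let ?m = "length cs"
  have cycle: "is_cycle V E cs"
    using is_cycle_if_closed_path[OF cs _ closing] chord by simp
  have edge: "E (cs ! (?m - 1)) (cs ! k)"
    using chord cs unfolding path_in_def by (simp add: last_conv_nth)
  have index: "?m - 1 + 1 = ?m" "?m - 1 < ?m" "k < ?m" "?m - 1 \<noteq> k" "?m - 1 \<noteq> k + 1"
    using chord by linarith+
  have "k \<noteq> (?m - 1 + 1) mod ?m" "?m - 1 \<noteq> (k + 1) mod ?m"
    using chord index by simp_all
  with cycle edge index(2-4) show ?thesis
    unfolding has_chorded_cycle_def by blast
qed

lemma has_chorded_cycle_if_two_back_edges:
  assumes ps: "path_in E V ps" and pq: "p < q" "q + 2 < length ps"
    and edges: "E (last ps) (ps ! p)" "E (last ps) (ps ! q)"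
  shows "has_chorded_cycle V E"
proof (rule has_chorded_cycle_if_chord)
  show "path_in E V (drop p ps)"
    using path_in_drop[OF ps] pq by simp
  show "E (last (drop p ps)) (hd (drop p ps))" "E (last (drop p ps)) (drop p ps ! (q - p))"
    using edges pq by (simp_all add: hd_drop_conv_nth)
  show "0 < q - p" "q - p + 2 < length (drop p ps)"
    using pq by simp_all
qed

lemma back_neighbour_index:
  assumes sg: "sgraph V E" and ps: "c \<in> set ps" "E (last ps) c" "c \<noteq> ps ! (length ps - 2)"
  shows "\<exists>i. i + 2 < length ps \<and> ps ! i = c"
proof -
  obtain i where i: "i < length ps" "ps ! i = c"
    using ps(1) by (meson in_set_conv_nth)
  have "ps \<noteq> []"
    using ps(1) by auto
  then have "last ps = ps ! (length ps - 1)"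
    by (rule last_conv_nth)
  moreover have "c \<noteq> last ps"
    using ps(2) sgraph_irrefl[OF sg] by metis
  ultimately have "i \<noteq> length ps - 1"
    using i by metis
  moreover have "i \<noteq> length ps - 2"
    using i ps(3) by blast
  ultimately show ?thesis
    using i by (intro exI[of _ i]) linarith
qed

lemma card_nbhd_last_le_2:
  assumes sg: "sgraph V E" and chordless: "\<not> has_chorded_cycle V E"
    and ps: "path_in E V ps" and nbhd: "nbhd V E (last ps) \<subseteq> set ps"
  shows "card (nbhd V E (last ps)) \<le> 2"
proof (rule ccontr)
  let ?A = "nbhd V E (last ps) - {ps ! (length ps - 2)}"
  assume "\<not> card (nbhd V E (last ps)) \<le> 2"
  then have "\<not> card ?A \<le> Suc 0"
    by (auto simp: card_Diff_singleton_if finite_nbhd[OF sg])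
  then obtain a b where ab: "a \<in> ?A" "b \<in> ?A" "a \<noteq> b"
    using card_le_Suc0_iff_eq[of ?A] finite_nbhd[OF sg] by blast
  have index: "\<exists>i. i + 2 < length ps \<and> ps ! i = c" if "c \<in> ?A" for c
    using back_neighbour_index[OF sg] that nbhd in_nbhd_iff[OF sg] by blast
  obtain i j where ij: "i + 2 < length ps" "ps ! i = a" "j + 2 < length ps" "ps ! j = b"
    using index[OF ab(1)] index[OF ab(2)] by blast
  have edges: "E (last ps) (ps ! i)" "E (last ps) (ps ! j)"
    using ab ij in_nbhd_iff[OF sg] by blast+
  have "i < j \<or> j < i"
    using ij ab(3) nat_neq_iff by blast
  then show False
  proof
    assume "i < j"
    from has_chorded_cycle_if_two_back_edges[OF ps this ij(3) edges] chordless show False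
      by contradiction
  next
    assume "j < i"
    from has_chorded_cycle_if_two_back_edges[OF ps this ij(1) edges(2,1)] chordless show False
      by contradiction
  qed
qed

section \<open>Longest paths and Posa rotations\<close>

definition longest_path_from :: "('a \<Rightarrow> 'a \<Rightarrow> bool) \<Rightarrow> 'a set \<Rightarrow> 'a \<Rightarrow> 'a list \<Rightarrow> bool" where
  "longest_path_from E S x ps \<longleftrightarrow> path_in E S ps \<and> hd ps = x \<and>
     (\<forall>qs. path_in E S qs \<and> hd qs = x \<longrightarrow> length qs \<le> length ps)"

lemma longest_path_fromD:
  "longest_path_from E S x ps \<Longrightarrow> path_in E S ps"
  "longest_path_from E S x ps \<Longrightarrow> hd ps = x"
  unfolding longest_path_from_def by simp_all

lemma length_path_in_le_card: "finite S \<Longrightarrow> path_in E S ps \<Longrightarrow> length ps \<le> card S"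
  unfolding path_in_def by (metis card_mono distinct_card)

lemma ex_longest_path_from:
  assumes S: "finite S" and ps: "path_in E S ps"
  shows "\<exists>qs. longest_path_from E S (hd ps) qs \<and> length ps \<le> length qs"
proof -
  let ?P = "\<lambda>n. \<exists>qs. path_in E S qs \<and> hd qs = hd ps \<and> length qs = n"
  have "\<forall>n. ?P n \<longrightarrow> n \<le> card S"
    using length_path_in_le_card[OF S] by blast
  then obtain n where n: "?P n" "\<forall>k. ?P k \<longrightarrow> k \<le> n"
    using Nat.ex_has_greatest_nat[of ?P "length ps" "card S"] ps by blast
  then obtain qs where "path_in E S qs" "hd qs = hd ps" "length qs = n"
    by blast
  with n(2) ps show ?thesis
    unfolding longest_path_from_def by blast
qed

lemma longest_path_from_nbhd_subset:
  assumes ps: "longest_path_from E S x ps" and S: "nbhd V E (last ps) \<subseteq> S"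
  shows "nbhd V E (last ps) \<subseteq> set ps"
proof
  fix z
  assume z: "z \<in> nbhd V E (last ps)"
  have path: "path_in E S ps" "hd ps = x"
    and longest: "\<And>qs. path_in E S qs \<Longrightarrow> hd qs = x \<Longrightarrow> length qs \<le> length ps"
    using ps unfolding longest_path_from_def by simp_all
  show "z \<in> set ps"
  proof (rule ccontr)
    assume "z \<notin> set ps"
    moreover have "z \<in> S" "E (last ps) z"
      using z S unfolding nbhd_def by blast+
    ultimately have "path_in E S (ps @ [z])"
      using path(1) unfolding path_in_def by (simp add: successively_append_iff)
    moreover have "hd (ps @ [z]) = x"
      using path unfolding path_in_def by simp
    ultimately show False
      using longest by fastforce
  qed
qed

definition posa_rotation :: "nat \<Rightarrow> 'a list \<Rightarrow> 'a list" where
  "posa_rotation i ps = take (Suc i) ps @ rev (drop (Suc i) ps)"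

lemma length_posa_rotation [simp]: "length (posa_rotation i ps) = length ps"
  unfolding posa_rotation_def by simp

lemma hd_posa_rotation: "ps \<noteq> [] \<Longrightarrow> hd (posa_rotation i ps) = hd ps"
  unfolding posa_rotation_def by (cases ps) simp_all

lemma last_posa_rotation: "Suc i < length ps \<Longrightarrow> last (posa_rotation i ps) = ps ! Suc i"
  unfolding posa_rotation_def by (simp add: last_rev hd_drop_conv_nth)

lemma path_in_posa_rotation:
  assumes sym: "symp E" and ps: "path_in E S ps" and i: "Suc i < length ps"
    and edge: "E (ps ! i) (last ps)"
  shows "path_in E S (posa_rotation i ps)"
proof -
  have "set (take (Suc i) ps) \<inter> set (drop (Suc i) ps) = {}"
    using ps unfolding path_in_def by (metis distinct_append append_take_drop_id)
  moreover have "set (posa_rotation i ps) = set ps"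
    unfolding posa_rotation_def by (metis append_take_drop_id set_append set_rev)
  moreover have "successively E (rev (drop (Suc i) ps))"
    using ps sym unfolding path_in_def
    by (auto intro: successively_mono[OF successively_drop] dest: sympD)
  moreover have "last (take (Suc i) ps) = ps ! i" "hd (rev (drop (Suc i) ps)) = last ps"
    using i by (simp_all add: take_Suc_conv_app_nth hd_rev)
  ultimately show ?thesis
    using ps i edge unfolding path_in_def posa_rotation_def
    by (auto simp: successively_append_iff successively_take)
qed

lemma longest_path_from_posa_rotation:
  assumes "symp E" "longest_path_from E S x ps" "Suc i < length ps" "E (ps ! i) (last ps)"
  shows "longest_path_from E S x (posa_rotation i ps)"
  using assms path_in_posa_rotation[of E S ps i] hd_posa_rotation[of ps i]
  unfolding longest_path_from_def path_in_def by auto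

section \<open>Minimum degree\<close>

lemma ex_other_neighbour_of_pendant:
  assumes sg: "sgraph V E" and conn: "connected_in E V" and V: "3 \<le> card V"
    and u: "u \<in> V" "nbhd V E u = {v}"
  shows "\<exists>w. E v w \<and> w \<noteq> u"
proof (rule ccontr)
  assume "\<not> (\<exists>w. E v w \<and> w \<noteq> u)"
  then have closed: "\<forall>a b. a \<in> {u, v} \<longrightarrow> b \<in> V \<longrightarrow> E a b \<longrightarrow> b \<in> {u, v}"
    using u(2) unfolding nbhd_def by blast
  have "card {u, v} < card V"
    using V by (simp add: card_insert_if)
  then obtain t where t: "t \<in> V" "t \<notin> {u, v}"
    by (metis card_mono finite.insertI finite.emptyI leD subsetI)
  with conn u(1) have "reach_in E V u t"
    unfolding connected_in_def by blast
  then have "t \<in> {u, v}"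
    by (rule reach_in_closed) (use closed in simp_all)
  with t show False
    by blast
qed

lemma has_chorded_cycle_if_pendant:
  assumes sg: "sgraph V E" and conn: "connected_in E V" and V: "4 \<le> card V"
    and d2: "delta2_ge V E 4" and u: "u \<in> V" and Nu: "nbhd V E u = {v}"
  shows "has_chorded_cycle V E"
proof (rule ccontr)
  assume chordless: "\<not> has_chorded_cycle V E"
  have uv: "v \<in> V" "E u v"
    using Nu unfolding nbhd_def by blast+
  obtain w where vw: "E v w" "w \<noteq> u"
    using ex_other_neighbour_of_pendant[OF sg conn _ u Nu] V by auto
  have "u \<noteq> v" "v \<noteq> w" "w \<in> V"
    using uv vw sgraph_irrefl[OF sg] sgraph_edge_in[OF sg] by metis+
  with uv vw u have "path_in E V [u, v, w]"
    unfolding path_in_def by simp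
  then obtain ps where ps: "longest_path_from E V u ps" "3 \<le> length ps"
    using ex_longest_path_from[OF sgraph_finite[OF sg]] by fastforce
  have path: "path_in E V ps"
    using ps(1) by (rule longest_path_fromD)
  then have hd: "ps ! 0 = u"
    using longest_path_fromD(2)[OF ps(1)] unfolding path_in_def by (simp add: hd_conv_nth)
  have "E u (ps ! 1)"
    using successively_nth[of E ps 0] path ps(2) hd unfolding path_in_def by simp
  then have "ps ! 1 = v"
    using Nu in_nbhd_iff[OF sg] by blast
  moreover have "last ps = ps ! (length ps - 1)"
    using path unfolding path_in_def by (simp add: last_conv_nth)
  moreover have "ps ! (length ps - 1) \<noteq> ps ! 0" "ps ! (length ps - 1) \<noteq> ps ! 1"
    using ps(2) by (intro path_in_nth_neq[OF path]; linarith)+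
  ultimately have "last ps \<noteq> u" "last ps \<noteq> v"
    using hd by simp_all
  then have "\<not> E u (last ps)"
    using Nu in_nbhd_iff[OF sg] by blast
  then have "\<not> E (last ps) u"
    using sgraph_symp[OF sg] by (metis sympD)
  moreover have "last ps \<in> V"
    using path unfolding path_in_def by auto
  ultimately have "4 \<le> card (nbhd V E (last ps) \<union> nbhd V E u)"
    using d2 u \<open>last ps \<noteq> u\<close> unfolding delta2_ge_def by blast
  then have "3 \<le> card (nbhd V E (last ps))"
    using card_Un_le[of "nbhd V E (last ps)" "nbhd V E u"] Nu by simp
  moreover have "nbhd V E (last ps) \<subseteq> set ps"
    using longest_path_from_nbhd_subset[OF ps(1) nbhd_subset] .
  ultimately show False
    using card_nbhd_last_le_2[OF sg chordless path] by simp
qed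

lemma two_le_card_nbhd:
  assumes sg: "sgraph V E" and conn: "connected_in E V" and V: "4 \<le> card V"
    and d2: "delta2_ge V E 4" and chordless: "\<not> has_chorded_cycle V E" and u: "u \<in> V"
  shows "2 \<le> card (nbhd V E u)"
proof (rule ccontr)
  assume "\<not> 2 \<le> card (nbhd V E u)"
  moreover have "V \<noteq> {u}"
    using V by (intro notI) simp
  then have "nbhd V E u \<noteq> {}"
    using ex_neighbour[OF conn u] u unfolding nbhd_def by blast
  then have "card (nbhd V E u) \<noteq> 0"
    using finite_nbhd[OF sg] by simp
  ultimately have "card (nbhd V E u) = 1"
    by linarith
  then obtain v where "nbhd V E u = {v}"
    by (rule card_1_singletonE)
  with has_chorded_cycle_if_pendant[OF sg conn V d2 u] chordless show False
    by blast
qed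

section \<open>Leaf blocks\<close>

context
  fixes V :: "'a set" and E :: "'a \<Rightarrow> 'a \<Rightarrow> bool" and B :: "'a set" and x :: 'a
  assumes sg: "sgraph V E" and chordless: "\<not> has_chorded_cycle V E"
    and min_degree: "\<forall>v\<in>V. 2 \<le> card (nbhd V E v)"
    and B_V: "B \<subseteq> V" and B_closed: "\<forall>w\<in>B - {x}. nbhd V E w \<subseteq> B"
begin

lemma longest_path_end_nbhd:
  assumes ps: "longest_path_from E B x ps" and y: "last ps \<noteq> x"
  shows "nbhd V E (last ps) \<subseteq> set ps" "card (nbhd V E (last ps)) = 2"
proof -
  have path: "path_in E B ps"
    using ps by (rule longest_path_fromD)
  then have "last ps \<in> B"
    unfolding path_in_def by auto
  with y B_closed show sub: "nbhd V E (last ps) \<subseteq> set ps"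
    using longest_path_from_nbhd_subset[OF ps] by blast
  have "card (nbhd V E (last ps)) \<le> 2"
    using card_nbhd_last_le_2[OF sg chordless path_in_mono[OF path B_V] sub] .
  moreover have "2 \<le> card (nbhd V E (last ps))"
    using min_degree \<open>last ps \<in> B\<close> B_V by blast
  ultimately show "card (nbhd V E (last ps)) = 2"
    by simp
qed

lemma longest_path_end_nbhd_eq:
  assumes ps: "longest_path_from E B x ps" "2 \<le> length ps"
  shows "\<exists>i. i + 2 < length ps \<and> nbhd V E (last ps) = {ps ! (length ps - 2), ps ! i}"
proof -
  let ?n = "length ps"
  have path: "path_in E B ps"
    using ps(1) by (rule longest_path_fromD)
  then have last: "last ps = ps ! (?n - 1)"
    unfolding path_in_def by (simp add: last_conv_nth)
  have hd: "ps ! 0 = x"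
    using longest_path_fromD(2)[OF ps(1)] path unfolding path_in_def by (simp add: hd_conv_nth)
  have "ps ! (?n - 1) \<noteq> ps ! 0"
    using ps(2) by (intro path_in_nth_neq[OF path]) linarith+
  with last hd have "last ps \<noteq> x"
    by simp
  note end_y = longest_path_end_nbhd[OF ps(1) this]
  have "Suc (?n - 2) = ?n - 1" "Suc (?n - 2) < ?n"
    using ps(2) by linarith+
  then have "E (ps ! (?n - 2)) (last ps)"
    using successively_nth[of E ps "?n - 2"] path last unfolding path_in_def by simp
  then have pred: "ps ! (?n - 2) \<in> nbhd V E (last ps)"
    using sympD[OF sgraph_symp[OF sg]] in_nbhd_iff[OF sg] by metis
  then have "card (nbhd V E (last ps) - {ps ! (?n - 2)}) = 1"
    using end_y(2) finite_nbhd[OF sg] by (simp add: card_Diff_singleton)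
  then obtain a where "nbhd V E (last ps) - {ps ! (?n - 2)} = {a}"
    by (rule card_1_singletonE)
  then have a: "a \<in> nbhd V E (last ps)" "a \<noteq> ps ! (?n - 2)"
    by blast+
  then obtain i where i: "i + 2 < ?n" "ps ! i = a"
    using back_neighbour_index[OF sg] end_y(1) in_nbhd_iff[OF sg] by blast
  with card_2_eq[OF end_y(2) pred a(1) a(2)[symmetric]] show ?thesis
    by auto
qed

lemma longest_path_rotated_end_nbhd:
  assumes ps: "longest_path_from E B x ps" and i: "i + 2 < length ps"
    and edge: "E (ps ! i) (last ps)"
  shows "nbhd V E (ps ! Suc i) = {ps ! i, ps ! Suc (Suc i)}"
proof -
  have sym: "symp E"
    using sg by (rule sgraph_symp)
  have path: "path_in E B ps"
    using ps by (rule longest_path_fromD)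
  let ?qs = "posa_rotation i ps"
  have "Suc i < length ps"
    using i by simp
  then have qs: "longest_path_from E B x ?qs" "last ?qs = ps ! Suc i"
    using longest_path_from_posa_rotation[OF sym ps _ edge] last_posa_rotation by simp_all
  have "ps ! Suc i \<noteq> ps ! 0"
    using i by (intro path_in_nth_neq[OF path]) linarith+
  moreover have "ps ! 0 = x"
    using longest_path_fromD(2)[OF ps] path unfolding path_in_def by (simp add: hd_conv_nth)
  ultimately have "ps ! Suc i \<noteq> x"
    by simp
  note end_v = longest_path_end_nbhd[OF qs(1), unfolded qs(2), OF this]
  have "E (ps ! i) (ps ! Suc i)" "E (ps ! Suc i) (ps ! Suc (Suc i))"
    using successively_nth[of E ps i] successively_nth[of E ps "Suc i"] path i
    unfolding path_in_def by simp_all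
  then have "ps ! i \<in> nbhd V E (ps ! Suc i)" "ps ! Suc (Suc i) \<in> nbhd V E (ps ! Suc i)"
    using sympD[OF sym] in_nbhd_iff[OF sg] by metis+
  moreover have "ps ! i \<noteq> ps ! Suc (Suc i)"
    using i by (intro path_in_nth_neq[OF path]) linarith+
  ultimately show ?thesis
    using card_2_eq[OF end_v(2)] by blast
qed

lemma longest_path_ends_in_triangle:
  assumes d2: "delta2_ge V E 4" and ps: "longest_path_from E B x ps" "2 \<le> length ps"
  shows "\<exists>i. length ps = i + 3 \<and> nbhd V E (ps ! Suc i) = {ps ! i, ps ! Suc (Suc i)}
    \<and> nbhd V E (ps ! Suc (Suc i)) = {ps ! Suc i, ps ! i}"
proof -
  let ?n = "length ps"
  obtain i where i: "i + 2 < ?n" and N_y: "nbhd V E (last ps) = {ps ! (?n - 2), ps ! i}"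
    using longest_path_end_nbhd_eq[OF ps] by blast
  then have "E (ps ! i) (last ps)"
    using sympD[OF sgraph_symp[OF sg]] in_nbhd_iff[OF sg] by blast
  with i have N_v: "nbhd V E (ps ! Suc i) = {ps ! i, ps ! Suc (Suc i)}"
    by (rule longest_path_rotated_end_nbhd[OF ps(1)])
  have path: "path_in E B ps"
    using ps(1) by (rule longest_path_fromD)
  then have last: "last ps = ps ! (?n - 1)"
    unfolding path_in_def by (simp add: last_conv_nth)
  have in_V: "ps ! j \<in> V" if "j < ?n" for j
    using path_in_nth_mem[OF path that] B_V by blast
  have "\<not> i + 3 < ?n"
  proof
    assume "i + 3 < ?n"
    then have "ps ! Suc i \<noteq> ps ! (?n - 2)" "ps ! Suc i \<noteq> ps ! i" "ps ! (?n - 1) \<noteq> ps ! Suc i"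
      by (intro path_in_nth_neq[OF path]; linarith)+
    then have "\<not> E (last ps) (ps ! Suc i)" "last ps \<noteq> ps ! Suc i"
      unfolding last[symmetric] using N_y in_nbhd_iff[OF sg] by blast+
    moreover have "last ps \<in> V" "ps ! Suc i \<in> V"
      unfolding last using i by (simp_all add: in_V)
    ultimately have "4 \<le> card (nbhd V E (last ps) \<union> nbhd V E (ps ! Suc i))"
      using d2 unfolding delta2_ge_def by blast
    moreover have "nbhd V E (last ps) \<union> nbhd V E (ps ! Suc i)
        = {ps ! (?n - 2), ps ! i, ps ! Suc (Suc i)}"
      unfolding N_y N_v by blast
    moreover have "card {ps ! (?n - 2), ps ! i, ps ! Suc (Suc i)} \<le> 3"
      by (simp add: card_insert_if)
    ultimately show False
      by simp
  qed
  with i have "?n = i + 3"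
    by linarith
  with N_y N_v last show ?thesis
    by (intro exI[of _ i]) (simp add: numeral_3_eq_3)
qed

lemma pendant_block_is_triangle:
  assumes d2: "delta2_ge V E 4" and B: "nonsep E B" and x: "x \<in> B" and b: "b \<in> B" "b \<noteq> x"
  shows "is_triangle E B"
proof -
  have "reach_in E B x b"
    using B x b unfolding nonsep_def connected_in_def by blast
  then obtain x' where x': "x' \<in> B" "E x x'"
    using reach_in_imp_edge b(2) by metis
  moreover have "x \<noteq> x'"
    using x'(2) sgraph_irrefl[OF sg] by metis
  ultimately have "path_in E B [x, x']"
    using x unfolding path_in_def by simp
  then obtain ps where ps: "longest_path_from E B x ps" "2 \<le> length ps"
    using ex_longest_path_from[OF finite_subset[OF B_V sgraph_finite[OF sg]]] by fastforce
  then obtain i where n: "length ps = i + 3"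
    and N_a1: "nbhd V E (ps ! Suc i) = {ps ! i, ps ! Suc (Suc i)}"
    and N_a2: "nbhd V E (ps ! Suc (Suc i)) = {ps ! Suc i, ps ! i}"
    using longest_path_ends_in_triangle[OF d2] by blast
  have path: "path_in E B ps"
    using ps(1) by (rule longest_path_fromD)
  have distinct: "ps ! i \<noteq> ps ! Suc i" "ps ! Suc i \<noteq> ps ! Suc (Suc i)" "ps ! i \<noteq> ps ! Suc (Suc i)"
    using n by (intro path_in_nth_neq[OF path]; linarith)+
  have in_B: "ps ! i \<in> B" "ps ! Suc i \<in> B" "ps ! Suc (Suc i) \<in> B"
    using n by (simp_all add: path_in_nth_mem[OF path])
  have "B = insert (ps ! i) {ps ! Suc i, ps ! Suc (Suc i)}"
  proof (rule nonsep_eq_insert_if_boundary[OF B])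
    show "\<forall>u\<in>{ps ! Suc i, ps ! Suc (Suc i)}. \<forall>w\<in>B. E u w \<longrightarrow>
        w \<in> {ps ! i, ps ! Suc i, ps ! Suc (Suc i)}"
      using N_a1 N_a2 B_V in_nbhd_iff[OF sg] by blast
  qed (use in_B distinct in auto)
  moreover have "E (ps ! Suc i) (ps ! i)" "E (ps ! Suc i) (ps ! Suc (Suc i))"
    "E (ps ! Suc (Suc i)) (ps ! i)"
    using N_a1 N_a2 in_nbhd_iff[OF sg] by blast+
  ultimately show ?thesis
    using distinct sgraph_symp[OF sg] unfolding is_triangle_def by (auto dest: sympD)
qed

end

theorem lemma2p9:
  fixes V :: "'a set" and E :: "'a \<Rightarrow> 'a \<Rightarrow> bool"
  assumes "sgraph V E"
    and "connected_in E V"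
    and "card V \<ge> 4"
    and "delta2_ge V E 4"
  shows "has_chorded_cycle V E \<or> (\<forall>B. leaf_block V E B \<longrightarrow> is_triangle E B)"
proof (cases "has_chorded_cycle V E")
  case chordless: False
  have min_degree: "\<forall>v\<in>V. 2 \<le> card (nbhd V E v)"
    using two_le_card_nbhd[OF assms chordless] by blast
  have "\<forall>B. leaf_block V E B \<longrightarrow> is_triangle E B"
  proof (intro allI impI)
    fix B
    assume "leaf_block V E B"
    then have B: "is_block V E B" and "card {y \<in> B. cut_vertex E V y} = 1"
      unfolding leaf_block_def by simp_all
    then obtain x where cut: "{y \<in> B. cut_vertex E V y} = {x}"
      by (meson card_1_singletonE)
    then have x: "x \<in> B"
      by blast
    have B_V: "B \<subseteq> V" and nonsep: "nonsep E B"
      using B unfolding is_block_def by blast+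
    have "2 \<le> card V"
      using assms(3) by simp
    note block_facts = assms(1,2) this B
    have B_closed: "\<forall>w\<in>B - {x}. nbhd V E w \<subseteq> B"
      using nbhd_subset_block[OF block_facts] cut by blast
    obtain b where "b \<in> B" "b \<noteq> x"
      using block_has_other_vertex[OF block_facts x] by blast
    with pendant_block_is_triangle[OF assms(1) chordless min_degree B_V B_closed assms(4) nonsep x]
    show "is_triangle E B"
      by blast
  qed
  then show ?thesis
    by blast
qed simp

end
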